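(* In the setting below, let $(x^{(k)},z^{(k)})$ be generated by the Bregman PD3O algorithm \[x^{(k+1)}=\mathrm{prox}^{\phi_{\mathrm p}}_{\tau f}\big(x^{(k)},\tau A^Tz^{(k)}+\tau\nabla h(x^{(k)})\big),\] \[z^{(k+1)}=\mathrm{prox}^{\phi_{\mathrm d}}_{\sigma g^*}\Big(z^{(k)},-\sigma A\big(2x^{(k+1)}-x^{(k)}+\tau(\nabla h(x^{(k)})-\nabla h(x^{(k+1)}))\big)\Big),\] with $x^{(0)}\in\operatorname{int}(\operatorname{dom}\phi_{\mathrm p})$, $z^{(0)}\in\operatorname{int}(\operatorname{dom}\phi_{\mathrm d})$, and let $x^{(k)}_{\mathrm{avg}}=\frac1k\sum_{i=1}^kx^{(i)}$, $z^{(k)}_{\mathrm{avg}}=\frac1k\sum_{i=1}^kz^{(i)}$. Then for all $k\ge1$, all $x\in\operatorname{dom}f\cap\operatorname{dom}\phi_{\mathrm p}$ and all $z\in\operatorname{dom}g^*\cap\operatorname{dom}\phi_{\mathrm d}$, \[\mathcal L(x^{(k)}_{\mathrm{avg}},z)-\mathcal L(x,z^{(k)}_{\mathrm{avg}})\le\frac3k\Big(\frac2\tau d_{\mathrm p}(x,x^{(0)})+\frac1\sigma d_{\mathrm d}(z,z^{(0)})\Big).\]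
   Context: Setting: $f:\mathbb R^n\to\mathbb R\cup\{+\infty\}$ and $g:\mathbb R^m\to\mathbb R\cup\{+\infty\}$ closed convex, $g$ and $f+h$ proper, $A\in\mathbb R^{m\times n}$, $g^*$ the conjugate of $g$. $h:\mathbb R^n\to\mathbb R$ is convex and differentiable with $h(y)-h(x)-\langle\nabla h(x),y-x\rangle\le\frac L2\|y-x\|^2$ for all $x,y$ (Euclidean norm), $L>0$. Lagrangian $\mathcal L(x,z)=f(x)+h(x)+\langle z,Ax\rangle-g^*(z)$ (value $+\infty$ if $x\notin\operatorname{dom}f$, $-\infty$ if $x\in\operatorname{dom}f$, $z\notin\operatorname{dom}g^*$). A Bregman kernel $\phi$ is convex with $\operatorname{int}(\operatorname{dom}\phi)\ne\emptyset$, continuous on $\operatorname{dom}\phi$, continuously differentiable on the interior; distance $d(x,y)=\phi(x)-\phi(y)-\langle\nabla\phi(y),x-y\rangle$ on $\operatorname{dom}\phi\times\operatorname{int}(\operatorname{dom}\phi)$; $\mathrm{prox}^\phi_F(y,a)=\operatorname{argmin}_x\big(F(x)+\langle a,x\rangle+d(x,y)\big)$, assumed to be a unique point of $\operatorname{int}(\operatorname{dom}\phi)$ for all $a$ and $y\in\operatorname{int}(\operatorname{dom}\phi)$. Kernels $\phi_{\mathrm p}$ (on $\mathbb R^n$), $\phi_{\mathrm d}$ (on $\mathbb R^m$) have distances with $d_{\mathrm p}(x,x')\ge\frac12\|x-x'\|^2$ and $d_{\mathrm d}(z,z')\ge\frac12\|z-z'\|_{\mathrm d}^2$ for a norm $\|\cdot\|_{\mathrm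 d}$. $\|A\|=\sup_{v\ne0}\|Av\|_{\mathrm d,*}/\|v\|$ with $\|\cdot\|_{\mathrm d,*}$ the dual norm. Stepsizes $\sigma,\tau>0$ satisfy $\sigma\tau\|A\|^2\le1$ and $\tau\le1/L$. The optimality conditions $0\in\partial f(x)+\nabla h(x)+A^Tz$, $0\in\partial g^*(z)-Ax$ have a solution in $\operatorname{dom}\phi_{\mathrm p}\times\operatorname{dom}\phi_{\mathrm d}$. *)

theory Defs
  imports "HOL-Analysis.Analysis" "HOL-Library.Extended_Real"
begin

definition edom :: "('a \<Rightarrow> ereal) \<Rightarrow> 'a set" where
  "edom f = {x. f x < \<infinity>}"

definition epigraph :: "('a \<Rightarrow> ereal) \<Rightarrow> ('a \<times> real) set" where
  "epigraph f = {(x, t). f x \<le> ereal t}"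

definition econvex :: "('a::real_vector \<Rightarrow> ereal) \<Rightarrow> bool" where
  "econvex f \<longleftrightarrow> convex (epigraph f)"

definition eclosed :: "('a::topological_space \<Rightarrow> ereal) \<Rightarrow> bool" where
  "eclosed f \<longleftrightarrow> closed (epigraph f)"

definition eproper :: "('a \<Rightarrow> ereal) \<Rightarrow> bool" where
  "eproper f \<longleftrightarrow> (\<forall>x. f x \<noteq> -\<infinity>) \<and> (\<exists>x. f x < \<infinity>)"

definition conjugate :: "('a::real_inner \<Rightarrow> ereal) \<Rightarrow> 'a \<Rightarrow> ereal" where
  "conjugate g z = (SUP x. ereal (z \<bullet> x) - g x)"

definition subdiff :: "('a::real_inner \<Rightarrow> ereal) \<Rightarrow> 'a \<Rightarrow> 'a set" where
  "subdiff f x = {s. f x \<noteq> \<infinity> \<and> (\<forall>y. f x + ereal (s \<bullet> (y - x)) \<le> f y)}"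

definition is_norm :: "('a::real_vector \<Rightarrow> real) \<Rightarrow> bool" where
  "is_norm N \<longleftrightarrow> (\<forall>z. N z \<ge> 0) \<and> (\<forall>z. N z = 0 \<longleftrightarrow> z = 0)
     \<and> (\<forall>c z. N (c *\<^sub>R z) = \<bar>c\<bar> * N z) \<and> (\<forall>z w. N (z + w) \<le> N z + N w)"

definition dual_norm :: "('a::real_inner \<Rightarrow> real) \<Rightarrow> 'a \<Rightarrow> real" where
  "dual_norm N w = Sup {w \<bullet> z | z. N z \<le> 1}"

definition op_norm :: "(real^'m \<Rightarrow> real) \<Rightarrow> real^'n^'m \<Rightarrow> real" where
  "op_norm Nd A = Sup {dual_norm Nd (A *v v) / norm v | v. v \<noteq> 0}"

text \<open>A Bregman kernel is represented by its (convex) effective domain D, its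
  (finite) values phi on D and its gradient dphi on the interior of D.\<close>

definition bregman_kernel :: "'a::euclidean_space set \<Rightarrow> ('a \<Rightarrow> real) \<Rightarrow> ('a \<Rightarrow> 'a) \<Rightarrow> bool" where
  "bregman_kernel D phi dphi \<longleftrightarrow> convex D \<and> convex_on D phi \<and> interior D \<noteq> {}
     \<and> continuous_on D phi
     \<and> (\<forall>y\<in>interior D. (phi has_derivative (\<lambda>v. dphi y \<bullet> v)) (at y))
     \<and> continuous_on (interior D) dphi"

definition bdist :: "('a::real_inner \<Rightarrow> real) \<Rightarrow> ('a \<Rightarrow> 'a) \<Rightarrow> 'a \<Rightarrow> 'a \<Rightarrow> real" where
  "bdist phi dphi x y = phi x - phi y - dphi y \<bullet> (x - y)"

definition is_bprox :: "'a::real_inner set \<Rightarrow> ('a \<Rightarrow> real) \<Rightarrow> ('a \<Rightarrow> 'a) \<Rightarrow> ('a \<Rightarrow> ereal)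
    \<Rightarrow> 'a \<Rightarrow> 'a \<Rightarrow> 'a \<Rightarrow> bool" where
  "is_bprox D phi dphi F y a p \<longleftrightarrow> p \<in> D \<and>
     (\<forall>x\<in>D. F p + ereal (a \<bullet> p + bdist phi dphi p y) \<le> F x + ereal (a \<bullet> x + bdist phi dphi x y))"

definition bprox :: "'a::real_inner set \<Rightarrow> ('a \<Rightarrow> real) \<Rightarrow> ('a \<Rightarrow> 'a) \<Rightarrow> ('a \<Rightarrow> ereal)
    \<Rightarrow> 'a \<Rightarrow> 'a \<Rightarrow> 'a" where
  "bprox D phi dphi F y a = (THE p. is_bprox D phi dphi F y a p)"

definition bprox_wellposed :: "'a::real_inner set \<Rightarrow> ('a \<Rightarrow> real) \<Rightarrow> ('a \<Rightarrow> 'a) \<Rightarrow> ('a \<Rightarrow> ereal) \<Rightarrow> bool" where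
  "bprox_wellposed D phi dphi F \<longleftrightarrow> (\<forall>y\<in>interior D. \<forall>a.
     (\<exists>!p. is_bprox D phi dphi F y a p) \<and> (\<forall>p. is_bprox D phi dphi F y a p \<longrightarrow> p \<in> interior D))"

definition lagrangian :: "(real^'n \<Rightarrow> ereal) \<Rightarrow> (real^'n \<Rightarrow> real) \<Rightarrow> (real^'m \<Rightarrow> ereal)
    \<Rightarrow> real^'n^'m \<Rightarrow> real^'n \<Rightarrow> real^'m \<Rightarrow> ereal" where
  "lagrangian f h g A x z =
     (if x \<notin> edom f then \<infinity>
      else if z \<notin> edom (conjugate g) then -\<infinity>
      else f x + ereal (h x + z \<bullet> (A *v x)) - conjugate g z)"

end

theory Submission
  imports Defs
begin

text \<open>Each iteration consists of two Bregman proximal steps. For a comparison point (x, z), their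
  three-point inequalities, cocoercivity of \<nabla>h (this is where \<tau> \<le> 1/L enters) and Young's
  inequality for the coupling term (where \<sigma>\<tau>|A|^2 \<le> 1 enters) give

    L(x_{j+1}, z) - L(x, z_{j+1}) \<le> V_j - V_{j+1}

  for the energy

    V_j = d_p(x, x_j)/\<tau> + d_d(z, z_j)/\<sigma> - \<langle>z_j - z, A(x_j - x - \<tau>(\<nabla>h(x_j) - \<nabla>h(x)))\<rangle> - D_h(x_j, x),

  D_h being the Bregman distance of h. The same inequalities give
  0 \<le> V_j \<le> 2 (d_p(x, x_j)/\<tau> + d_d(z, z_j)/\<sigma>). Telescoping, and Jensen's inequality for the
  convex-concave Lagrangian, bound the gap at the averages by 2/k (d_p(x, x_0)/\<tau> + d_d(z, z_0)/\<sigma>),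
  which is below the claimed bound.\<close>

section \<open>Elementary convex analysis\<close>

lemma directional_derivative_ge:
  fixes F :: "'a::real_normed_vector \<Rightarrow> real"
  assumes F': "(F has_derivative F') (at p)"
    and chords: "\<And>t. 0 < t \<Longrightarrow> t < 1 \<Longrightarrow> t * c \<le> F (p + t *\<^sub>R v) - F p"
  shows "c \<le> F' v"
proof -
  have line: "((\<lambda>t. p + t *\<^sub>R v) has_derivative (\<lambda>t. t *\<^sub>R v)) (at 0)"
    by (auto intro!: derivative_eq_intros)
  have "((\<lambda>t. F (p + t *\<^sub>R v)) has_derivative (\<lambda>t. F' (t *\<^sub>R v))) (at 0)"
    using has_derivative_compose[OF line, of F F'] F' by simp
  moreover have "(\<lambda>t. F' (t *\<^sub>R v)) = (*) (F' v)"
    using has_derivative_linear[OF F'] by (auto simp: linear_scale mult.commute)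
  ultimately have "((\<lambda>t. F (p + t *\<^sub>R v)) has_field_derivative F' v) (at 0 within {0<..})"
    unfolding has_field_derivative_def by (metis has_derivative_at_withinI)
  then have lim: "((\<lambda>t. (F (p + t *\<^sub>R v) - F p) / t) \<longlongrightarrow> F' v) (at_right 0)"
    by (simp add: has_field_derivative_iff)
  have "\<forall>\<^sub>F t in at_right (0::real). t \<in> {0<..<1}"
    by (rule eventually_at_right_real) simp
  then have "\<forall>\<^sub>F t in at_right (0::real). c \<le> (F (p + t *\<^sub>R v) - F p) / t"
    by eventually_elim (use chords in \<open>auto simp: pos_le_divide_eq mult.commute\<close>)
  then show ?thesis
    by (rule tendsto_lowerbound[OF lim]) simp
qed

lemma convex_on_gradient_inequality:
  fixes h :: "'a::real_inner \<Rightarrow> real"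
  assumes h: "convex_on C h" and "x \<in> C" "y \<in> C"
    and grad: "(h has_derivative (\<lambda>v. g \<bullet> v)) (at x)"
  shows "h x + g \<bullet> (y - x) \<le> h y"
proof -
  have "h x - h y \<le> - (g \<bullet> (y - x))"
  proof (rule directional_derivative_ge[OF has_derivative_minus[OF grad]])
    fix t :: real assume "0 < t" "t < 1"
    then have "h ((1 - t) *\<^sub>R x + t *\<^sub>R y) \<le> (1 - t) * h x + t * h y"
      using convex_onD[OF h] \<open>x \<in> C\<close> \<open>y \<in> C\<close> by simp
    moreover have "x + t *\<^sub>R (y - x) = (1 - t) *\<^sub>R x + t *\<^sub>R y"
      by (simp add: algebra_simps)
    ultimately show "t * (h x - h y) \<le> - h (x + t *\<^sub>R (y - x)) - - h x"
      by (simp add: algebra_simps)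
  qed
  then show ?thesis by simp
qed

lemma bdist_three_point_identity:
  "bdist phi dphi u y = bdist phi dphi u p + bdist phi dphi p y + (dphi p - dphi y) \<bullet> (u - p)"
  unfolding bdist_def by (simp add: algebra_simps inner_diff_left inner_diff_right)

text \<open>The minimality of \<open>p\<close> along the segment from \<open>p\<close> to \<open>u\<close> only involves \<open>\<nabla>\<phi>(p)\<close>,
  so no convexity of \<open>\<phi>\<close> is needed.\<close>
lemma bregman_argmin_three_point:
  fixes F :: "'a::real_inner \<Rightarrow> real"
  assumes D: "convex D" and F: "convex_on C F"
    and p: "p \<in> D" "p \<in> C" and u: "u \<in> D" "u \<in> C"
    and dphi: "(phi has_derivative (\<lambda>v. dphi p \<bullet> v)) (at p)"
    and argmin: "\<And>x. x \<in> D \<Longrightarrow> x \<in> C \<Longrightarrow>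
               F p + a \<bullet> p + bdist phi dphi p y \<le> F x + a \<bullet> x + bdist phi dphi x y"
  shows "F p + a \<bullet> p + bdist phi dphi p y + bdist phi dphi u p \<le> F u + a \<bullet> u + bdist phi dphi u y"
proof -
  define Psi where "Psi v = F v + a \<bullet> v + (dphi p - dphi y) \<bullet> (v - p)" for v
  have "Psi p - Psi u + dphi p \<bullet> (u - p) \<le> dphi p \<bullet> (u - p)"
  proof (rule directional_derivative_ge[OF dphi])
    fix t :: real assume t: "0 < t" "t < 1"
    define ut where "ut = (1 - t) *\<^sub>R p + t *\<^sub>R u"
    have ut: "ut \<in> D" "ut \<in> C"
      unfolding ut_def using t p u D convex_on_imp_convex[OF F] by (simp_all add: convex_def)
    have "Psi p \<le> Psi ut + bdist phi dphi ut p"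
      using argmin[OF ut] bdist_three_point_identity[of phi dphi ut y p] unfolding Psi_def by simp
    moreover have "F ut \<le> (1 - t) * F p + t * F u"
      unfolding ut_def using convex_onD[OF F, of t p u] t p u by simp
    then have "Psi ut \<le> (1 - t) * Psi p + t * Psi u"
      unfolding Psi_def ut_def by (simp add: algebra_simps inner_add_right inner_diff_right)
    moreover have "bdist phi dphi ut p = phi (p + t *\<^sub>R (u - p)) - phi p - t * (dphi p \<bullet> (u - p))"
      unfolding bdist_def ut_def by (simp add: algebra_simps)
    ultimately show "t * (Psi p - Psi u + dphi p \<bullet> (u - p)) \<le> phi (p + t *\<^sub>R (u - p)) - phi p"
      by (simp add: algebra_simps)
  qed
  then show ?thesis
    using bdist_three_point_identity[of phi dphi u y p] unfolding Psi_def by simp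
qed

lemma norm_add_scaleR_squared_div:
  fixes d e :: "'a::real_inner"
  assumes "t > 0"
  shows "(norm (d + t *\<^sub>R e))\<^sup>2 / (2 * t) = (norm d)\<^sup>2 / (2 * t) + d \<bullet> e + t / 2 * (norm e)\<^sup>2"
  using assms unfolding power2_norm_eq_inner
  by (simp add: inner_add_left inner_add_right inner_commute field_simps)

lemma convex_smooth_gradient_gap:
  fixes h :: "'a::real_inner \<Rightarrow> real"
  assumes h: "convex_on UNIV h" and grad: "\<And>u. (h has_derivative (\<lambda>v. gh u \<bullet> v)) (at u)"
    and smooth: "\<And>u w. h w - h u - gh u \<bullet> (w - u) \<le> L / 2 * (norm (w - u))\<^sup>2" and L: "L > 0"
  shows "1 / (2 * L) * (norm (gh u - gh x))\<^sup>2 \<le> h u - h x - gh x \<bullet> (u - x)"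
proof -
  define e where "e = gh u - gh x"
  \<comment> \<open>\<open>y\<close> maximises the lower bound obtained from convexity at \<open>x\<close> and smoothness at \<open>u\<close>\<close>
  define y where "y = u - (1 / L) *\<^sub>R e"
  have "h x + gh x \<bullet> (y - x) \<le> h y"
    by (rule convex_on_gradient_inequality[OF h _ _ grad]) auto
  moreover have "h y - h u - gh u \<bullet> (y - u) \<le> L / 2 * (norm (y - u))\<^sup>2"
    by (rule smooth)
  moreover have "gh x \<bullet> (y - x) = gh x \<bullet> (u - x) - (1 / L) * (gh x \<bullet> e)"
    unfolding y_def by (simp add: inner_diff_right algebra_simps)
  moreover have "gh u \<bullet> (y - u) = - (1 / L) * (gh u \<bullet> e)"
    unfolding y_def by (simp add: inner_diff_right algebra_simps)
  moreover have "L / 2 * (norm (y - u))\<^sup>2 = 1 / (2 * L) * (norm e)\<^sup>2"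
    unfolding y_def using L by (simp add: power2_eq_square field_simps)
  moreover have "gh u \<bullet> e - gh x \<bullet> e = (norm e)\<^sup>2"
    unfolding e_def by (simp add: power2_norm_eq_inner inner_diff_left)
  then have "(1 / L) * (gh u \<bullet> e) - (1 / L) * (gh x \<bullet> e) = (1 / L) * (norm e)\<^sup>2"
    by (metis right_diff_distrib)
  ultimately show ?thesis
    unfolding e_def[symmetric] by (simp add: field_simps)
qed

lemma young_inequality_weighted:
  fixes K b c s t :: real
  assumes "b \<ge> 0" "c \<ge> 0" "s > 0" "t > 0" and K: "s * t * K\<^sup>2 \<le> 1"
  shows "K * b * c \<le> b\<^sup>2 / (2 * s) + c\<^sup>2 / (2 * t)"
proof -
  have "0 \<le> (b - s * \<bar>K\<bar> * c)\<^sup>2" by simp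
  then have "\<bar>K\<bar> * b * c \<le> b\<^sup>2 / (2 * s) + s * K\<^sup>2 * c\<^sup>2 / 2"
    using \<open>s > 0\<close> by (simp add: field_simps power2_eq_square)
  moreover have "s * K\<^sup>2 * c\<^sup>2 / 2 \<le> c\<^sup>2 / (2 * t)"
    using K \<open>t > 0\<close> mult_right_mono[OF K, of "c\<^sup>2"] by (simp add: field_simps)
  moreover have "K * b * c \<le> \<bar>K\<bar> * b * c"
    using \<open>b \<ge> 0\<close> \<open>c \<ge> 0\<close> by (simp add: mult_right_mono)
  ultimately show ?thesis by linarith
qed

lemma convex_on_mean:
  fixes y :: "nat \<Rightarrow> 'a::real_vector"
  assumes F: "convex_on C F" and "k \<ge> 1" and y: "\<And>i. i \<in> {1..k} \<Longrightarrow> y i \<in> C"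
  shows "(1 / real k) *\<^sub>R (\<Sum>i=1..k. y i) \<in> C"
    and "F ((1 / real k) *\<^sub>R (\<Sum>i=1..k. y i)) \<le> (1 / real k) * (\<Sum>i=1..k. F (y i))"
proof -
  have weights: "(\<Sum>i\<in>{1..k}. 1 / real k) = 1" using \<open>k \<ge> 1\<close> by simp
  have mean: "(1 / real k) *\<^sub>R (\<Sum>i=1..k. y i) = (\<Sum>i\<in>{1..k}. (1 / real k) *\<^sub>R y i)"
    by (simp add: scaleR_sum_right)
  show "(1 / real k) *\<^sub>R (\<Sum>i=1..k. y i) \<in> C"
    unfolding mean by (rule convex_sum[OF _ convex_on_imp_convex[OF F] weights]) (use y in auto)
  have "F (\<Sum>i\<in>{1..k}. (1 / real k) *\<^sub>R y i) \<le> (\<Sum>i\<in>{1..k}. (1 / real k) * F (y i))"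
    by (rule convex_on_sum[OF _ _ F weights]) (use y \<open>k \<ge> 1\<close> in auto)
  then show "F ((1 / real k) *\<^sub>R (\<Sum>i=1..k. y i)) \<le> (1 / real k) * (\<Sum>i=1..k. F (y i))"
    unfolding mean by (simp add: sum_distrib_left)
qed

section \<open>Norms on Euclidean spaces and their duals\<close>

lemma is_norm_zero: "is_norm N \<Longrightarrow> N 0 = 0"
  unfolding is_norm_def by metis

lemma is_norm_nonneg: "is_norm N \<Longrightarrow> 0 \<le> N z"
  unfolding is_norm_def by metis

lemma is_norm_pos: "is_norm N \<Longrightarrow> z \<noteq> 0 \<Longrightarrow> 0 < N z"
  unfolding is_norm_def by (metis less_eq_real_def)

lemma is_norm_scaleR: "is_norm N \<Longrightarrow> N (c *\<^sub>R z) = \<bar>c\<bar> * N z"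
  unfolding is_norm_def by metis

lemma is_norm_triangle: "is_norm N \<Longrightarrow> N (z + w) \<le> N z + N w"
  unfolding is_norm_def by metis

lemma is_norm_minus_commute: "is_norm N \<Longrightarrow> N (a - b) = N (b - a)"
  using is_norm_scaleR[of N "-1" "a - b"] by simp

lemma is_norm_sum_le:
  assumes N: "is_norm N" and "finite S"
  shows "N (sum f S) \<le> (\<Sum>i\<in>S. N (f i))"
  using \<open>finite S\<close>
proof (induction S rule: finite_induct)
  case empty
  then show ?case using is_norm_zero[OF N] by simp
next
  case (insert x F)
  then show ?case using is_norm_triangle[OF N, of "f x" "sum f F"] by simp
qed

lemma is_norm_le_norm:
  fixes N :: "'a::euclidean_space \<Rightarrow> real"
  assumes N: "is_norm N"
  shows "N z \<le> (\<Sum>b\<in>Basis. N b) * norm z"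
proof -
  have "N z = N (\<Sum>b\<in>Basis. (z \<bullet> b) *\<^sub>R b)"
    by (simp add: euclidean_representation)
  also have "\<dots> \<le> (\<Sum>b\<in>Basis. N ((z \<bullet> b) *\<^sub>R b))"
    by (rule is_norm_sum_le[OF N]) simp
  also have "\<dots> = (\<Sum>b\<in>Basis. \<bar>z \<bullet> b\<bar> * N b)"
    using is_norm_scaleR[OF N] by simp
  also have "\<dots> \<le> (\<Sum>b\<in>Basis. norm z * N b)"
    by (intro sum_mono mult_right_mono is_norm_nonneg[OF N]) (simp add: Basis_le_norm)
  finally show ?thesis
    by (simp add: sum_distrib_left mult.commute)
qed

lemma is_norm_continuous_on:
  fixes N :: "'a::euclidean_space \<Rightarrow> real"
  assumes N: "is_norm N"
  shows "continuous_on UNIV N"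
proof (rule lipschitz_on_continuous_on)
  show "(\<Sum>b\<in>Basis. N b)-lipschitz_on UNIV N"
  proof (rule lipschitz_onI)
    fix x y :: 'a
    have "N x \<le> N y + N (x - y)" "N y \<le> N x + N (x - y)"
      using is_norm_triangle[OF N, of y "x - y"] is_norm_triangle[OF N, of x "y - x"]
        is_norm_minus_commute[OF N, of x y] by simp_all
    then show "dist (N x) (N y) \<le> (\<Sum>b\<in>Basis. N b) * dist x y"
      using is_norm_le_norm[OF N, of "x - y"] by (simp add: dist_real_def dist_norm)
  next
    show "0 \<le> (\<Sum>b\<in>Basis. N b)"
      by (simp add: sum_nonneg is_norm_nonneg[OF N])
  qed
qed

lemma is_norm_ge_norm:
  fixes N :: "'a::euclidean_space \<Rightarrow> real"
  assumes N: "is_norm N"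
  obtains c where "c > 0" "\<And>z. c * norm z \<le> N z"
proof -
  obtain b :: 'a where "b \<in> Basis" using nonempty_Basis by blast
  then have "sphere (0::'a) 1 \<noteq> {}" by (auto intro!: exI[of _ b])
  then obtain z0 where z0: "z0 \<in> sphere 0 1" and min: "\<And>y. y \<in> sphere 0 1 \<Longrightarrow> N z0 \<le> N y"
    using continuous_attains_inf[OF compact_sphere _ continuous_on_subset[OF is_norm_continuous_on[OF N]]]
    by blast
  have "N z0 * norm z \<le> N z" for z
  proof (cases "z = 0")
    case True
    then show ?thesis using is_norm_zero[OF N] by simp
  next
    case False
    then have "N z0 \<le> N ((1 / norm z) *\<^sub>R z)" by (intro min) simp
    also have "\<dots> = N z / norm z" using is_norm_scaleR[OF N] by simp
    finally show ?thesis using False by (simp add: field_simps)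
  qed
  moreover have "N z0 > 0" using z0 by (intro is_norm_pos[OF N]) auto
  ultimately show ?thesis using that by blast
qed

lemma inner_bounded_on_is_norm_ball:
  fixes N :: "'a::euclidean_space \<Rightarrow> real"
  assumes N: "is_norm N"
  obtains c where "c > 0" "\<And>w z. N z \<le> 1 \<Longrightarrow> w \<bullet> z \<le> norm w / c"
proof -
  obtain c where c: "c > 0" "\<And>z. c * norm z \<le> N z" using is_norm_ge_norm[OF N] by blast
  have "w \<bullet> z \<le> norm w / c" if "N z \<le> 1" for w z
  proof -
    have "norm z \<le> 1 / c" using c(2)[of z] that c(1) by (simp add: field_simps)
    have "w \<bullet> z \<le> norm w * norm z" by (rule norm_cauchy_schwarz)
    also have "\<dots> \<le> norm w * (1 / c)" using \<open>norm z \<le> 1 / c\<close> by (rule mult_left_mono) simp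
    finally show ?thesis by simp
  qed
  then show ?thesis using that c(1) by blast
qed

lemma inner_le_dual_norm:
  fixes N :: "'a::euclidean_space \<Rightarrow> real"
  assumes N: "is_norm N" and "N z \<le> 1"
  shows "w \<bullet> z \<le> dual_norm N w"
proof -
  obtain c where "\<And>w z. N z \<le> 1 \<Longrightarrow> w \<bullet> z \<le> norm w / c"
    using inner_bounded_on_is_norm_ball[OF N] by blast
  then have "bdd_above {w \<bullet> z | z. N z \<le> 1}" by (intro bdd_aboveI[of _ "norm w / c"]) auto
  then show ?thesis
    unfolding dual_norm_def by (rule cSup_upper[rotated]) (use \<open>N z \<le> 1\<close> in auto)
qed

lemma dual_norm_le_norm:
  fixes N :: "'a::euclidean_space \<Rightarrow> real"
  assumes N: "is_norm N"
  obtains c where "c > 0" "\<And>w. dual_norm N w \<le> norm w / c"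
proof -
  obtain c where c: "c > 0" "\<And>w z. N z \<le> 1 \<Longrightarrow> w \<bullet> z \<le> norm w / c"
    using inner_bounded_on_is_norm_ball[OF N] by blast
  have "{w \<bullet> z | z. N z \<le> 1} \<noteq> {}" for w
    using is_norm_zero[OF N] by (auto intro!: exI[of _ 0])
  then have "dual_norm N w \<le> norm w / c" for w
    unfolding dual_norm_def by (rule cSup_least) (use c(2) in auto)
  then show ?thesis using that c(1) by blast
qed

lemma inner_le_dual_norm_mult:
  fixes N :: "'a::euclidean_space \<Rightarrow> real"
  assumes N: "is_norm N"
  shows "w \<bullet> z \<le> dual_norm N w * N z"
proof (cases "z = 0")
  case True
  then show ?thesis using is_norm_zero[OF N] by simp
next
  case False
  then have Nz: "N z > 0" by (rule is_norm_pos[OF N])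
  then have "N ((1 / N z) *\<^sub>R z) = 1" using is_norm_scaleR[OF N] by simp
  then have "w \<bullet> ((1 / N z) *\<^sub>R z) \<le> dual_norm N w" by (intro inner_le_dual_norm[OF N]) simp
  then show ?thesis using Nz by (simp add: field_simps)
qed

lemma dual_norm_zero:
  assumes N: "is_norm N"
  shows "dual_norm N 0 = 0"
proof -
  have "{0 \<bullet> z | z. N z \<le> 1} = {0::real}"
    using is_norm_zero[OF N] by (auto intro!: exI[of _ 0])
  then show ?thesis unfolding dual_norm_def by simp
qed

lemma dual_norm_matrix_le_op_norm:
  fixes A :: "real^'n^'m" and Nd :: "real^'m \<Rightarrow> real"
  assumes N: "is_norm Nd"
  shows "dual_norm Nd (A *v v) \<le> op_norm Nd A * norm v"
proof (cases "v = 0")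
  case True
  then show ?thesis using dual_norm_zero[OF N] by simp
next
  case False
  obtain c where c: "c > 0" "\<And>w. dual_norm Nd w \<le> norm w / c"
    using dual_norm_le_norm[OF N] by blast
  obtain B where B: "\<And>x. norm (A *v x) \<le> norm x * B"
    using bounded_linear.pos_bounded[of "\<lambda>x. A *v x"] by (auto simp: linear_conv_bounded_linear)
  have "bdd_above {dual_norm Nd (A *v u) / norm u | u. u \<noteq> 0}"
  proof (rule bdd_aboveI)
    fix r assume "r \<in> {dual_norm Nd (A *v u) / norm u | u. u \<noteq> 0}"
    then obtain u where r: "r = dual_norm Nd (A *v u) / norm u" and "u \<noteq> 0" by blast
    have "dual_norm Nd (A *v u) \<le> norm u * B / c"
      using c(2)[of "A *v u"] B[of u] c(1) by (smt (verit) divide_right_mono)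
    then show "r \<le> B / c" unfolding r using \<open>u \<noteq> 0\<close> by (simp add: field_simps)
  qed
  then have "dual_norm Nd (A *v v) / norm v \<le> op_norm Nd A"
    unfolding op_norm_def by (rule cSup_upper[rotated]) (use False in auto)
  then show ?thesis using False by (simp add: field_simps)
qed

lemma abs_inner_matrix_le_op_norm:
  fixes A :: "real^'n^'m" and Nd :: "real^'m \<Rightarrow> real"
  assumes N: "is_norm Nd"
  shows "\<bar>z \<bullet> (A *v v)\<bar> \<le> op_norm Nd A * Nd z * norm v"
proof -
  have "z \<bullet> (A *v u) \<le> op_norm Nd A * Nd z * norm u" for u
  proof -
    have "z \<bullet> (A *v u) \<le> dual_norm Nd (A *v u) * Nd z"
      using inner_le_dual_norm_mult[OF N, of "A *v u" z] by (simp add: inner_commute)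
    also have "\<dots> \<le> op_norm Nd A * norm u * Nd z"
      by (intro mult_right_mono dual_norm_matrix_le_op_norm[OF N] is_norm_nonneg[OF N])
    finally show ?thesis by (simp add: mult_ac)
  qed
  moreover have "A *v (- v) = - (A *v v)"
    using matrix_vector_mult_diff_distrib[of A 0 v] by simp
  ultimately show ?thesis
    using abs_le_iff by (metis inner_minus_right norm_minus_cancel)
qed

section \<open>Extended-real convexity and Bregman proximal points\<close>

lemma econvex_combination:
  fixes f :: "'a::real_vector \<Rightarrow> ereal"
  assumes f: "econvex f" and "f x \<le> ereal a" "f y \<le> ereal b" "0 \<le> t" "t \<le> 1"
  shows "f ((1 - t) *\<^sub>R x + t *\<^sub>R y) \<le> ereal ((1 - t) * a + t * b)"
proof -
  have "(x, a) \<in> epigraph f" "(y, b) \<in> epigraph f"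
    using assms unfolding epigraph_def by auto
  then have "(1 - t) *\<^sub>R (x, a) + t *\<^sub>R (y, b) \<in> epigraph f"
    using f \<open>0 \<le> t\<close> \<open>t \<le> 1\<close> unfolding econvex_def by (intro convexD) auto
  then show ?thesis unfolding epigraph_def by simp
qed

lemma real_of_ereal_edom:
  "x \<in> edom f \<Longrightarrow> f x \<noteq> -\<infinity> \<Longrightarrow> ereal (real_of_ereal (f x)) = f x"
  unfolding edom_def by (cases "f x") auto

lemma econvex_convex_on_edom:
  fixes f :: "'a::real_vector \<Rightarrow> ereal"
  assumes f: "econvex f" and finite: "\<And>x. f x \<noteq> -\<infinity>"
  shows "convex_on (edom f) (\<lambda>x. real_of_ereal (f x))"
proof -
  have comb: "(1 - t) *\<^sub>R x + t *\<^sub>R y \<in> edom f \<and>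
      real_of_ereal (f ((1 - t) *\<^sub>R x + t *\<^sub>R y)) \<le> (1 - t) * real_of_ereal (f x) + t * real_of_ereal (f y)"
    if "x \<in> edom f" "y \<in> edom f" "0 \<le> t" "t \<le> 1" for x y t
  proof -
    have le: "f ((1 - t) *\<^sub>R x + t *\<^sub>R y) \<le> ereal ((1 - t) * real_of_ereal (f x) + t * real_of_ereal (f y))"
      using that finite by (intro econvex_combination[OF f]) (simp_all add: real_of_ereal_edom)
    then show ?thesis
      using finite[of "(1 - t) *\<^sub>R x + t *\<^sub>R y"] unfolding edom_def
      by (cases "f ((1 - t) *\<^sub>R x + t *\<^sub>R y)") auto
  qed
  have "convex (edom f)"
    unfolding convex_alt using comb by blast
  then show ?thesis
    by (intro convex_onI) (use comb in auto)
qed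

lemma fenchel_young: "ereal (z \<bullet> x) - g x \<le> conjugate g z"
  unfolding conjugate_def by (rule SUP_upper) simp

text \<open>No properness of \<open>g\<close> is needed: a supremum of affine functions is convex.\<close>
lemma econvex_conjugate: "econvex (conjugate g)"
  unfolding econvex_def convex_alt epigraph_def
proof (clarsimp)
  fix z w :: 'a and a b u :: real
  assume z: "conjugate g z \<le> ereal a" and w: "conjugate g w \<le> ereal b" and u: "0 \<le> u" "u \<le> 1"
  show "conjugate g ((1 - u) *\<^sub>R z + u *\<^sub>R w) \<le> ereal ((1 - u) * a + u * b)"
    unfolding conjugate_def
  proof (rule SUP_least)
    fix x
    have za: "ereal (z \<bullet> x) - g x \<le> ereal a" and wb: "ereal (w \<bullet> x) - g x \<le> ereal b"
      using order_trans[OF fenchel_young z] order_trans[OF fenchel_young w] by blast+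
    show "ereal (((1 - u) *\<^sub>R z + u *\<^sub>R w) \<bullet> x) - g x \<le> ereal ((1 - u) * a + u * b)"
    proof (cases "g x")
      case (real r)
      then have "(1 - u) * (z \<bullet> x - r) + u * (w \<bullet> x - r) \<le> (1 - u) * a + u * b"
        using za wb u by (intro add_mono mult_left_mono) auto
      then show ?thesis using real by (simp add: algebra_simps)
    qed (use za in auto)
  qed
qed

lemma conjugate_neq_MInf:
  assumes "g x0 < \<infinity>"
  shows "conjugate g z \<noteq> -\<infinity>"
proof -
  have "ereal (z \<bullet> x0) - g x0 \<le> conjugate g z"
    by (rule fenchel_young)
  moreover have "ereal (z \<bullet> x0) - g x0 \<noteq> -\<infinity>"
    using assms by (cases "g x0") auto
  ultimately show ?thesis by auto
qed

lemma bprox_is_bprox: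
  assumes "bprox_wellposed D phi dphi F" "y \<in> interior D"
  shows "is_bprox D phi dphi F y a (bprox D phi dphi F y a)"
proof -
  have "\<exists>!p. is_bprox D phi dphi F y a p"
    using assms unfolding bprox_wellposed_def by blast
  then show ?thesis
    unfolding bprox_def by (rule theI')
qed

lemma bprox_interior:
  assumes "bprox_wellposed D phi dphi F" "y \<in> interior D"
  shows "bprox D phi dphi F y a \<in> interior D"
  using assms(1) bprox_is_bprox[OF assms] assms(2) unfolding bprox_wellposed_def by blast

lemma bprox_three_point:
  fixes G :: "'a::euclidean_space \<Rightarrow> ereal"
  assumes kernel: "bregman_kernel D phi dphi"
    and prox: "is_bprox D phi dphi (\<lambda>v. ereal c * G v) y a p" and p: "p \<in> interior D"
    and "c > 0" and finite: "\<And>v. G v \<noteq> -\<infinity>"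
    and G: "convex_on (edom G) (\<lambda>v. real_of_ereal (G v))" and u: "u \<in> D" "u \<in> edom G"
  shows "p \<in> edom G"
    and "c * real_of_ereal (G p) + a \<bullet> p + bdist phi dphi p y + bdist phi dphi u p
         \<le> c * real_of_ereal (G u) + a \<bullet> u + bdist phi dphi u y"
proof -
  have min: "ereal c * G p + ereal (a \<bullet> p + bdist phi dphi p y) \<le> ereal c * G v + ereal (a \<bullet> v + bdist phi dphi v y)"
    if "v \<in> D" for v
    using prox that unfolding is_bprox_def by blast
  obtain r where "G u = ereal r"
    using real_of_ereal_edom[OF u(2) finite] by metis
  then have "G p \<noteq> \<infinity>"
    using min[OF u(1)] \<open>c > 0\<close> by auto
  then show pG: "p \<in> edom G"
    unfolding edom_def by (simp add: top.not_eq_extremum)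
  show "c * real_of_ereal (G p) + a \<bullet> p + bdist phi dphi p y + bdist phi dphi u p
         \<le> c * real_of_ereal (G u) + a \<bullet> u + bdist phi dphi u y"
  proof (rule bregman_argmin_three_point[OF _ convex_on_cmul[OF _ G] _ pG u])
    show "convex D" "(phi has_derivative (\<lambda>v. dphi p \<bullet> v)) (at p)"
      using kernel p unfolding bregman_kernel_def by blast+
    show "p \<in> D" using p interior_subset by blast
    fix v assume "v \<in> D" "v \<in> edom G"
    then show "c * real_of_ereal (G p) + a \<bullet> p + bdist phi dphi p y
             \<le> c * real_of_ereal (G v) + a \<bullet> v + bdist phi dphi v y"
      using min[of v] real_of_ereal_edom[OF pG finite] real_of_ereal_edom[of v G, OF _ finite]
      by (metis add.assoc ereal_less_eq(3) plus_ereal.simps(1) times_ereal.simps(1))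
  qed (use \<open>c > 0\<close> in simp)
qed

section \<open>The Bregman PD3O iteration\<close>

lemma inner_vector_matrix: "y \<bullet> ((x::real^_) v* A) = x \<bullet> (A *v y)"
  by (metis dot_lmul_matrix inner_commute)

text \<open>Splits the bilinear terms of one iteration into the coupling terms of the energy at two
  consecutive iterates and a cross term.\<close>
lemma pd3o_coupling_identity:
  fixes x x1 u gx gx1 gu :: "real^'n" and z z1 w :: "real^'m" and A :: "real^'n^'m" and t :: real
  shows "- ((transpose A *v z) \<bullet> (x1 - u))
     + (A *v (2 *\<^sub>R x1 - x + t *\<^sub>R (gx - gx1))) \<bullet> (z1 - w) + w \<bullet> (A *v x1) - z1 \<bullet> (A *v u)
   = (z1 - w) \<bullet> (A *v (x1 - u - t *\<^sub>R (gx1 - gu))) - (z - w) \<bullet> (A *v (x - u - t *\<^sub>R (gx - gu)))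
     + (z1 - z) \<bullet> (A *v (x1 - x + t *\<^sub>R (gx - gu)))"
  by (simp add: dot_lmul_matrix inner_vector_matrix inner_diff_left inner_diff_right inner_add_left inner_add_right
      matrix_vector_mult_diff_distrib matrix_vector_right_distrib matrix_vector_mult_scaleR
      inner_commute algebra_simps)

definition lagrangian_real :: "(real^'n \<Rightarrow> ereal) \<Rightarrow> (real^'n \<Rightarrow> real) \<Rightarrow> (real^'m \<Rightarrow> ereal)
    \<Rightarrow> real^'n^'m \<Rightarrow> real^'n \<Rightarrow> real^'m \<Rightarrow> real" where
  "lagrangian_real f h g A x z =
     real_of_ereal (f x) + h x + z \<bullet> (A *v x) - real_of_ereal (conjugate g z)"

locale bregman_pd3o =
  fixes f :: "real^'n \<Rightarrow> ereal" and g :: "real^'m \<Rightarrow> ereal"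
    and h :: "real^'n \<Rightarrow> real" and gh :: "real^'n \<Rightarrow> real^'n"
    and A :: "real^'n^'m" and L \<sigma> \<tau> :: real
    and Dp :: "(real^'n) set" and phip :: "real^'n \<Rightarrow> real" and dphip :: "real^'n \<Rightarrow> real^'n"
    and Dd :: "(real^'m) set" and phid :: "real^'m \<Rightarrow> real" and dphid :: "real^'m \<Rightarrow> real^'m"
    and Nd :: "real^'m \<Rightarrow> real"
    and xk :: "nat \<Rightarrow> real^'n" and zk :: "nat \<Rightarrow> real^'m"
  assumes f_econvex: "econvex f" and f_not_MInf: "\<And>u. f u \<noteq> -\<infinity>"
    and g_proper: "eproper g"
    and h_convex: "convex_on UNIV h"
    and h_grad: "\<And>u. (h has_derivative (\<lambda>v. gh u \<bullet> v)) (at u)"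
    and L_pos: "L > 0"
    and h_smooth: "\<And>u w. h w - h u - gh u \<bullet> (w - u) \<le> L / 2 * (norm (w - u))\<^sup>2"
    and kernel_p: "bregman_kernel Dp phip dphip"
    and kernel_d: "bregman_kernel Dd phid dphid"
    and Nd_norm: "is_norm Nd"
    and dp_strong: "\<And>u w. u \<in> Dp \<Longrightarrow> w \<in> interior Dp \<Longrightarrow> bdist phip dphip u w \<ge> 1/2 * (norm (u - w))\<^sup>2"
    and dd_strong: "\<And>u w. u \<in> Dd \<Longrightarrow> w \<in> interior Dd \<Longrightarrow> bdist phid dphid u w \<ge> 1/2 * (Nd (u - w))\<^sup>2"
    and prox_p: "bprox_wellposed Dp phip dphip (\<lambda>u. ereal \<tau> * f u)"
    and prox_d: "bprox_wellposed Dd phid dphid (\<lambda>w. ereal \<sigma> * conjugate g w)"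
    and \<sigma>_pos: "\<sigma> > 0" and \<tau>_pos: "\<tau> > 0"
    and step_sizes: "\<sigma> * \<tau> * (op_norm Nd A)\<^sup>2 \<le> 1" and \<tau>_le: "\<tau> \<le> 1 / L"
    and init_x: "xk 0 \<in> interior Dp" and init_z: "zk 0 \<in> interior Dd"
    and iter_x: "\<And>j. xk (Suc j) = bprox Dp phip dphip (\<lambda>u. ereal \<tau> * f u) (xk j)
                   (\<tau> *\<^sub>R (transpose A *v zk j) + \<tau> *\<^sub>R gh (xk j))"
    and iter_z: "\<And>j. zk (Suc j) = bprox Dd phid dphid (\<lambda>w. ereal \<sigma> * conjugate g w) (zk j)
                   (- \<sigma> *\<^sub>R (A *v (2 *\<^sub>R xk (Suc j) - xk j + \<tau> *\<^sub>R (gh (xk j) - gh (xk (Suc j))))))"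
begin

abbreviation "dp \<equiv> bdist phip dphip"
abbreviation "dd \<equiv> bdist phid dphid"
abbreviation "F u \<equiv> real_of_ereal (f u)"
abbreviation "G w \<equiv> real_of_ereal (conjugate g w)"
abbreviation "lag \<equiv> lagrangian_real f h g A"

lemma conjugate_not_MInf: "conjugate g w \<noteq> -\<infinity>"
  using g_proper conjugate_neq_MInf unfolding eproper_def by blast

lemma lagrangian_eq_lagrangian_real:
  assumes "x \<in> edom f" "z \<in> edom (conjugate g)"
  shows "lagrangian f h g A x z = ereal (lag x z)"
proof -
  obtain a b where "f x = ereal a" "conjugate g z = ereal b"
    using real_of_ereal_edom[OF assms(1) f_not_MInf] real_of_ereal_edom[OF assms(2) conjugate_not_MInf]
    by metis
  then show ?thesis
    using assms unfolding lagrangian_def lagrangian_real_def by simp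
qed

lemma convex_on_lagrangian_left: "convex_on (edom f) (\<lambda>u. lag u z)"
proof -
  have "convex (edom f)"
    using convex_on_imp_convex[OF econvex_convex_on_edom[OF f_econvex f_not_MInf]] .
  moreover have "convex_on (edom f) (\<lambda>u. z \<bullet> (A *v u))"
    by (rule convex_onI[OF _ \<open>convex (edom f)\<close>])
       (simp add: matrix_vector_right_distrib matrix_vector_mult_scaleR inner_add_right)
  ultimately have "convex_on (edom f) (\<lambda>u. (F u + h u + z \<bullet> (A *v u)) + - G z)"
    by (intro convex_on_add econvex_convex_on_edom f_econvex f_not_MInf convex_on_subset[OF h_convex])
       (simp_all add: convex_on_const)
  then show ?thesis
    unfolding lagrangian_real_def by simp
qed

lemma convex_on_neg_lagrangian_right: "convex_on (edom (conjugate g)) (\<lambda>w. - lag x w)"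
proof -
  have "convex (edom (conjugate g))"
    using convex_on_imp_convex[OF econvex_convex_on_edom[OF econvex_conjugate conjugate_not_MInf]] .
  moreover have "convex_on (edom (conjugate g)) (\<lambda>w. - (w \<bullet> (A *v x)))"
    by (rule convex_onI[OF _ \<open>convex (edom (conjugate g))\<close>]) (simp add: inner_add_left algebra_simps)
  ultimately have "convex_on (edom (conjugate g)) (\<lambda>w. (G w + - (w \<bullet> (A *v x))) + (- F x - h x))"
    by (intro convex_on_add econvex_convex_on_edom econvex_conjugate conjugate_not_MInf)
       (simp_all add: convex_on_const)
  then show ?thesis
    unfolding lagrangian_real_def by (simp add: algebra_simps)
qed

lemma xk_interior: "xk j \<in> interior Dp"
  by (induction j) (simp_all add: init_x iter_x bprox_interior[OF prox_p])

lemma zk_interior: "zk j \<in> interior Dd"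
  by (induction j) (simp_all add: init_z iter_z bprox_interior[OF prox_d])

lemma xk_in_Dp: "xk j \<in> Dp"
  using xk_interior interior_subset by blast

lemma zk_in_Dd: "zk j \<in> Dd"
  using zk_interior interior_subset by blast

lemma primal_three_point:
  assumes x: "x \<in> edom f" "x \<in> Dp"
  shows "xk (Suc j) \<in> edom f"
    and "F (xk (Suc j)) - F x + (transpose A *v zk j + gh (xk j)) \<bullet> (xk (Suc j) - x)
         \<le> dp x (xk j) / \<tau> - dp x (xk (Suc j)) / \<tau> - dp (xk (Suc j)) (xk j) / \<tau>"
proof -
  note three_point = bprox_three_point[OF kernel_p _ xk_interior \<tau>_pos f_not_MInf
      econvex_convex_on_edom[OF f_econvex f_not_MInf] x(2,1)]
  have prox: "is_bprox Dp phip dphip (\<lambda>u. ereal \<tau> * f u) (xk j)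
      (\<tau> *\<^sub>R (transpose A *v zk j) + \<tau> *\<^sub>R gh (xk j)) (xk (Suc j))"
    unfolding iter_x by (rule bprox_is_bprox[OF prox_p xk_interior])
  show "xk (Suc j) \<in> edom f" by (rule three_point(1)[OF prox])
  have "\<tau> * (F (xk (Suc j)) - F x + (transpose A *v zk j + gh (xk j)) \<bullet> (xk (Suc j) - x))
      \<le> dp x (xk j) - dp x (xk (Suc j)) - dp (xk (Suc j)) (xk j)"
    using three_point(2)[OF prox] by (simp add: inner_diff_right algebra_simps)
  then have "F (xk (Suc j)) - F x + (transpose A *v zk j + gh (xk j)) \<bullet> (xk (Suc j) - x)
      \<le> (dp x (xk j) - dp x (xk (Suc j)) - dp (xk (Suc j)) (xk j)) / \<tau>"
    using \<tau>_pos by (simp add: pos_le_divide_eq mult.commute)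
  then show "F (xk (Suc j)) - F x + (transpose A *v zk j + gh (xk j)) \<bullet> (xk (Suc j) - x)
         \<le> dp x (xk j) / \<tau> - dp x (xk (Suc j)) / \<tau> - dp (xk (Suc j)) (xk j) / \<tau>"
    by (simp add: diff_divide_distrib)
qed

lemma dual_three_point:
  fixes j :: nat
  assumes z: "z \<in> edom (conjugate g)" "z \<in> Dd"
  defines "xbar \<equiv> 2 *\<^sub>R xk (Suc j) - xk j + \<tau> *\<^sub>R (gh (xk j) - gh (xk (Suc j)))"
  shows "zk (Suc j) \<in> edom (conjugate g)"
    and "G (zk (Suc j)) - G z - (A *v xbar) \<bullet> (zk (Suc j) - z)
         \<le> dd z (zk j) / \<sigma> - dd z (zk (Suc j)) / \<sigma> - dd (zk (Suc j)) (zk j) / \<sigma>"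
proof -
  note three_point = bprox_three_point[OF kernel_d _ zk_interior \<sigma>_pos conjugate_not_MInf
      econvex_convex_on_edom[OF econvex_conjugate conjugate_not_MInf] z(2,1)]
  have prox: "is_bprox Dd phid dphid (\<lambda>w. ereal \<sigma> * conjugate g w) (zk j)
      (- \<sigma> *\<^sub>R (A *v xbar)) (zk (Suc j))"
    unfolding iter_z xbar_def by (rule bprox_is_bprox[OF prox_d zk_interior])
  show "zk (Suc j) \<in> edom (conjugate g)" by (rule three_point(1)[OF prox])
  have "\<sigma> * (G (zk (Suc j)) - G z - (A *v xbar) \<bullet> (zk (Suc j) - z))
      \<le> dd z (zk j) - dd z (zk (Suc j)) - dd (zk (Suc j)) (zk j)"
    using three_point(2)[OF prox] by (simp add: inner_diff_right algebra_simps)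
  then have "G (zk (Suc j)) - G z - (A *v xbar) \<bullet> (zk (Suc j) - z)
      \<le> (dd z (zk j) - dd z (zk (Suc j)) - dd (zk (Suc j)) (zk j)) / \<sigma>"
    using \<sigma>_pos by (simp add: pos_le_divide_eq mult.commute)
  then show "G (zk (Suc j)) - G z - (A *v xbar) \<bullet> (zk (Suc j) - z)
         \<le> dd z (zk j) / \<sigma> - dd z (zk (Suc j)) / \<sigma> - dd (zk (Suc j)) (zk j) / \<sigma>"
    by (simp add: diff_divide_distrib)
qed

lemma abs_inner_matrix_young: "\<bar>w \<bullet> (A *v q)\<bar> \<le> (Nd w)\<^sup>2 / (2 * \<sigma>) + (norm q)\<^sup>2 / (2 * \<tau>)"
  using abs_inner_matrix_le_op_norm[OF Nd_norm, of w A q]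
    young_inequality_weighted[of "Nd w" "norm q", OF is_norm_nonneg[OF Nd_norm] norm_ge_zero \<sigma>_pos \<tau>_pos step_sizes]
  by linarith

lemma h_gap_cocoercive: "\<tau> / 2 * (norm (gh u - gh x))\<^sup>2 \<le> h u - h x - gh x \<bullet> (u - x)"
proof -
  have "\<tau> / 2 \<le> 1 / (2 * L)" using \<tau>_le L_pos by (simp add: field_simps)
  then have "\<tau> / 2 * (norm (gh u - gh x))\<^sup>2 \<le> 1 / (2 * L) * (norm (gh u - gh x))\<^sup>2"
    by (rule mult_right_mono) simp
  then show ?thesis
    using convex_smooth_gradient_gap[OF h_convex h_grad h_smooth L_pos, of u x] by linarith
qed

lemma h_gap_nonneg: "0 \<le> h u - h x - gh x \<bullet> (u - x)"
  using convex_on_gradient_inequality[OF h_convex _ _ h_grad, of x u] by simp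

lemma dp_strong_div: "u \<in> Dp \<Longrightarrow> (norm (u - xk j))\<^sup>2 / (2 * \<tau>) \<le> dp u (xk j) / \<tau>"
  using dp_strong[OF _ xk_interior, of u j] \<tau>_pos by (simp add: field_simps)

lemma dd_strong_div: "w \<in> Dd \<Longrightarrow> (Nd (w - zk j))\<^sup>2 / (2 * \<sigma>) \<le> dd w (zk j) / \<sigma>"
  using dd_strong[OF _ zk_interior, of w j] \<sigma>_pos by (simp add: field_simps)

lemma dp_nonneg: "u \<in> Dp \<Longrightarrow> 0 \<le> dp u (xk j)"
  using order_trans[OF _ dp_strong[OF _ xk_interior]] by simp

lemma dd_nonneg: "w \<in> Dd \<Longrightarrow> 0 \<le> dd w (zk j)"
  using order_trans[OF _ dd_strong[OF _ zk_interior]] by simp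

definition energy :: "real^'n \<Rightarrow> real^'m \<Rightarrow> nat \<Rightarrow> real" where
  "energy x z j = dp x (xk j) / \<tau> + dd z (zk j) / \<sigma>
     - (zk j - z) \<bullet> (A *v (xk j - x - \<tau> *\<^sub>R (gh (xk j) - gh x)))
     - (h (xk j) - h x - gh x \<bullet> (xk j - x))"

lemma energy_bounds:
  assumes x: "x \<in> Dp" and z: "z \<in> Dd"
  shows "0 \<le> energy x z j" and "energy x z j \<le> 2 * (dp x (xk j) / \<tau> + dd z (zk j) / \<sigma>)"
proof -
  define e where "e = gh x - gh (xk j)"
  define H where "H = h (xk j) - h x - gh x \<bullet> (xk j - x)"
  define C where "C = h x - h (xk j) - gh (xk j) \<bullet> (x - xk j)"
  have q: "xk j - x - \<tau> *\<^sub>R (gh (xk j) - gh x) = (xk j - x) + \<tau> *\<^sub>R e"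
    unfolding e_def by (simp add: algebra_simps)
  have "(xk j - x) \<bullet> e = - (H + C)"
    unfolding e_def H_def C_def by (simp add: inner_diff_left inner_diff_right inner_commute)
  moreover have "\<tau> / 2 * (norm e)\<^sup>2 \<le> C"
    using h_gap_cocoercive[of x "xk j"] unfolding e_def C_def .
  ultimately have "(norm ((xk j - x) + \<tau> *\<^sub>R e))\<^sup>2 / (2 * \<tau>) \<le> (norm (xk j - x))\<^sup>2 / (2 * \<tau>) - H"
    using norm_add_scaleR_squared_div[OF \<tau>_pos, of "xk j - x" e] by linarith
  then have coupling: "\<bar>(zk j - z) \<bullet> (A *v ((xk j - x) + \<tau> *\<^sub>R e))\<bar> \<le> dd z (zk j) / \<sigma> + dp x (xk j) / \<tau> - H"
    using abs_inner_matrix_young[of "zk j - z" "(xk j - x) + \<tau> *\<^sub>R e"] dd_strong_div[OF z, of j]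
      dp_strong_div[OF x, of j] is_norm_minus_commute[OF Nd_norm, of z "zk j"]
    by (simp add: norm_minus_commute)
  have "0 \<le> H"
    unfolding H_def by (rule h_gap_nonneg)
  have energy: "energy x z j = dp x (xk j) / \<tau> + dd z (zk j) / \<sigma>
      - (zk j - z) \<bullet> (A *v ((xk j - x) + \<tau> *\<^sub>R e)) - H"
    unfolding energy_def q H_def ..
  show "0 \<le> energy x z j"
    using abs_le_D1[OF coupling] unfolding energy by linarith
  have "energy x z j \<le> 2 * (dp x (xk j) / \<tau> + dd z (zk j) / \<sigma>) - 2 * H"
    using abs_le_D2[OF coupling] unfolding energy by simp
  then show "energy x z j \<le> 2 * (dp x (xk j) / \<tau> + dd z (zk j) / \<sigma>)"
    using \<open>0 \<le> H\<close> by linarith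
qed

lemma lagrangian_gap_step:
  assumes x: "x \<in> edom f" "x \<in> Dp" and z: "z \<in> edom (conjugate g)" "z \<in> Dd"
  shows "lag (xk (Suc j)) z - lag x (zk (Suc j)) \<le> energy x z j - energy x z (Suc j)"
proof -
  define x0 x1 z0 z1 where "x0 = xk j" "x1 = xk (Suc j)" "z0 = zk j" "z1 = zk (Suc j)"
  define v where "v = x1 - x0 + \<tau> *\<^sub>R (gh x0 - gh x)"
  have primal: "F x1 - F x + (transpose A *v z0) \<bullet> (x1 - x) + gh x0 \<bullet> (x1 - x)
      \<le> dp x x0 / \<tau> - dp x x1 / \<tau> - dp x1 x0 / \<tau>"
    using primal_three_point(2)[OF x, of j] unfolding x0_x1_z0_z1_def by (simp add: inner_add_left)
  have dual: "G z1 - G z - (A *v (2 *\<^sub>R x1 - x0 + \<tau> *\<^sub>R (gh x0 - gh x1))) \<bullet> (z1 - z)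
      \<le> dd z z0 / \<sigma> - dd z z1 / \<sigma> - dd z1 z0 / \<sigma>"
    using dual_three_point(2)[OF z, of j] unfolding x0_x1_z0_z1_def .
  have coupling: "- ((transpose A *v z0) \<bullet> (x1 - x))
      + (A *v (2 *\<^sub>R x1 - x0 + \<tau> *\<^sub>R (gh x0 - gh x1))) \<bullet> (z1 - z) + z \<bullet> (A *v x1) - z1 \<bullet> (A *v x)
      = (z1 - z) \<bullet> (A *v (x1 - x - \<tau> *\<^sub>R (gh x1 - gh x))) - (z0 - z) \<bullet> (A *v (x0 - x - \<tau> *\<^sub>R (gh x0 - gh x)))
        + (z1 - z0) \<bullet> (A *v v)"
    unfolding v_def by (rule pd3o_coupling_identity)
  have "(z1 - z0) \<bullet> (A *v v) \<le> (Nd (z1 - z0))\<^sup>2 / (2 * \<sigma>) + (norm v)\<^sup>2 / (2 * \<tau>)"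
    using abs_inner_matrix_young[of "z1 - z0" v] by linarith
  moreover have "(norm v)\<^sup>2 / (2 * \<tau>)
      = (norm (x1 - x0))\<^sup>2 / (2 * \<tau>) + (x1 - x0) \<bullet> (gh x0 - gh x) + \<tau> / 2 * (norm (gh x0 - gh x))\<^sup>2"
    unfolding v_def by (rule norm_add_scaleR_squared_div[OF \<tau>_pos])
  moreover have "\<tau> / 2 * (norm (gh x0 - gh x))\<^sup>2 \<le> h x - h x0 - gh x0 \<bullet> (x - x0)"
    using h_gap_cocoercive[of x x0] by (simp add: norm_minus_commute)
  moreover have "h x1 - h x - gh x0 \<bullet> (x1 - x) + (x1 - x0) \<bullet> (gh x0 - gh x)
      = (h x1 - h x - gh x \<bullet> (x1 - x)) - (h x0 - h x - gh x \<bullet> (x0 - x)) - (h x - h x0 - gh x0 \<bullet> (x - x0))"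
    by (simp add: inner_diff_left inner_diff_right inner_commute)
  moreover have "(norm (x1 - x0))\<^sup>2 / (2 * \<tau>) \<le> dp x1 x0 / \<tau>"
    unfolding x0_x1_z0_z1_def by (rule dp_strong_div[OF xk_in_Dp])
  moreover have "(Nd (z1 - z0))\<^sup>2 / (2 * \<sigma>) \<le> dd z1 z0 / \<sigma>"
    unfolding x0_x1_z0_z1_def by (rule dd_strong_div[OF zk_in_Dd])
  ultimately show ?thesis
    using primal dual coupling unfolding energy_def lagrangian_real_def x0_x1_z0_z1_def by linarith
qed

lemma lagrangian_gap_sum:
  assumes "x \<in> edom f" "x \<in> Dp" "z \<in> edom (conjugate g)" "z \<in> Dd"
  shows "(\<Sum>i=1..n. lag (xk i) z - lag x (zk i)) \<le> energy x z 0 - energy x z n"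
proof (induction n)
  case (Suc n)
  then show ?case using lagrangian_gap_step[OF assms, of n] by simp
qed simp

theorem ergodic_lagrangian_gap:
  assumes k: "k \<ge> 1" and x: "x \<in> edom f" "x \<in> Dp" and z: "z \<in> edom (conjugate g)" "z \<in> Dd"
  shows "lagrangian f h g A ((1 / real k) *\<^sub>R (\<Sum>i=1..k. xk i)) z
           - lagrangian f h g A x ((1 / real k) *\<^sub>R (\<Sum>i=1..k. zk i))
         \<le> ereal (2 / real k * (dp x (xk 0) / \<tau> + dd z (zk 0) / \<sigma>))"
proof -
  have xk_edom: "xk i \<in> edom f" and zk_edom: "zk i \<in> edom (conjugate g)" if "i \<in> {1..k}" for i
    using that primal_three_point(1)[OF x, of "i - 1"] dual_three_point(1)[OF z, of "i - 1"] by auto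
  note mean_x = convex_on_mean[where y = xk, OF convex_on_lagrangian_left[of z] k xk_edom]
  note mean_z = convex_on_mean[where y = zk, OF convex_on_neg_lagrangian_right[of x] k zk_edom]
  have "lag ((1 / real k) *\<^sub>R (\<Sum>i=1..k. xk i)) z - lag x ((1 / real k) *\<^sub>R (\<Sum>i=1..k. zk i))
      \<le> (1 / real k) * (\<Sum>i=1..k. lag (xk i) z - lag x (zk i))"
    using mean_x(2) mean_z(2) by (simp add: sum_subtractf right_diff_distrib sum_negf)
  also have "\<dots> \<le> (1 / real k) * (energy x z 0 - energy x z k)"
    by (intro mult_left_mono lagrangian_gap_sum x z) simp
  also have "\<dots> \<le> (1 / real k) * (2 * (dp x (xk 0) / \<tau> + dd z (zk 0) / \<sigma>))"
    using energy_bounds(2)[OF x(2) z(2), of 0] energy_bounds(1)[OF x(2) z(2), of k]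
    by (intro mult_left_mono) simp_all
  finally show ?thesis
    using mean_x(1) mean_z(1) x z by (simp add: lagrangian_eq_lagrangian_real)
qed

end

theorem mainTheorem9:
  fixes f :: "real^'n \<Rightarrow> ereal" and g :: "real^'m \<Rightarrow> ereal"
    and h :: "real^'n \<Rightarrow> real" and gh :: "real^'n \<Rightarrow> real^'n"
    and A :: "real^'n^'m" and L \<sigma> \<tau> :: real
    and Dp :: "(real^'n) set" and phip :: "real^'n \<Rightarrow> real" and dphip :: "real^'n \<Rightarrow> real^'n"
    and Dd :: "(real^'m) set" and phid :: "real^'m \<Rightarrow> real" and dphid :: "real^'m \<Rightarrow> real^'m"
    and Nd :: "real^'m \<Rightarrow> real"
    and xk :: "nat \<Rightarrow> real^'n" and zk :: "nat \<Rightarrow> real^'m"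
    and k :: nat and x :: "real^'n" and z :: "real^'m"
  assumes f_cc: "econvex f" "eclosed f"
    and g_cc: "econvex g" "eclosed g" "eproper g"
    and fh_proper: "eproper (\<lambda>u. f u + ereal (h u))"
    and h_conv: "convex_on UNIV h"
    and h_grad: "\<And>u. (h has_derivative (\<lambda>v. gh u \<bullet> v)) (at u)"
    and L_pos: "L > 0"
    and h_smooth: "\<And>u w. h w - h u - gh u \<bullet> (w - u) \<le> L / 2 * (norm (w - u))\<^sup>2"
    and kp: "bregman_kernel Dp phip dphip"
    and kd: "bregman_kernel Dd phid dphid"
    and Nd_norm: "is_norm Nd"
    and dp_strong: "\<And>u w. u \<in> Dp \<Longrightarrow> w \<in> interior Dp \<Longrightarrow> bdist phip dphip u w \<ge> 1/2 * (norm (u - w))\<^sup>2"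
    and dd_strong: "\<And>u w. u \<in> Dd \<Longrightarrow> w \<in> interior Dd \<Longrightarrow> bdist phid dphid u w \<ge> 1/2 * (Nd (u - w))\<^sup>2"
    and prox_p: "bprox_wellposed Dp phip dphip (\<lambda>u. ereal \<tau> * f u)"
    and prox_d: "bprox_wellposed Dd phid dphid (\<lambda>w. ereal \<sigma> * conjugate g w)"
    and steps: "\<sigma> > 0" "\<tau> > 0" "\<sigma> * \<tau> * (op_norm Nd A)\<^sup>2 \<le> 1" "\<tau> \<le> 1 / L"
    and saddle: "\<exists>xs zs. xs \<in> Dp \<and> zs \<in> Dd
                   \<and> - (gh xs + transpose A *v zs) \<in> subdiff f xs
                   \<and> A *v xs \<in> subdiff (conjugate g) zs"
    and init: "xk 0 \<in> interior Dp" "zk 0 \<in> interior Dd"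
    and iter_x: "\<And>j. xk (Suc j) = bprox Dp phip dphip (\<lambda>u. ereal \<tau> * f u) (xk j)
                   (\<tau> *\<^sub>R (transpose A *v zk j) + \<tau> *\<^sub>R gh (xk j))"
    and iter_z: "\<And>j. zk (Suc j) = bprox Dd phid dphid (\<lambda>w. ereal \<sigma> * conjugate g w) (zk j)
                   (- \<sigma> *\<^sub>R (A *v (2 *\<^sub>R xk (Suc j) - xk j + \<tau> *\<^sub>R (gh (xk j) - gh (xk (Suc j))))))"
    and k_pos: "k \<ge> 1"
    and x_mem: "x \<in> edom f \<inter> Dp"
    and z_mem: "z \<in> edom (conjugate g) \<inter> Dd"
  shows "lagrangian f h g A ((1 / real k) *\<^sub>R (\<Sum>i=1..k. xk i)) z
           - lagrangian f h g A x ((1 / real k) *\<^sub>R (\<Sum>i=1..k. zk i))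
         \<le> ereal (3 / real k * (2 / \<tau> * bdist phip dphip x (xk 0) + 1 / \<sigma> * bdist phid dphid z (zk 0)))"
proof -
  have f_not_MInf: "f u \<noteq> -\<infinity>" for u
    using fh_proper unfolding eproper_def by force
  interpret bregman_pd3o f g h gh A L \<sigma> \<tau> Dp phip dphip Dd phid dphid Nd xk zk
    using f_cc(1) f_not_MInf g_cc(3) h_conv h_grad L_pos h_smooth kp kd Nd_norm dp_strong dd_strong
      prox_p prox_d steps init iter_x iter_z
    by unfold_locales
  have "0 \<le> dp x (xk 0)" "0 \<le> dd z (zk 0)"
    using dp_nonneg dd_nonneg x_mem z_mem by blast+
  then have "0 \<le> dp x (xk 0) / \<tau>" "0 \<le> dd z (zk 0) / \<sigma>"
    using steps(1,2) by simp_all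
  then have "2 * (dp x (xk 0) / \<tau> + dd z (zk 0) / \<sigma>)
      \<le> 3 * (2 / \<tau> * dp x (xk 0) + 1 / \<sigma> * dd z (zk 0))"
    by simp
  then have "2 / real k * (dp x (xk 0) / \<tau> + dd z (zk 0) / \<sigma>)
      \<le> 3 / real k * (2 / \<tau> * dp x (xk 0) + 1 / \<sigma> * dd z (zk 0))"
    using divide_right_mono[of _ _ "real k"] by simp
  then show ?thesis
    using ergodic_lagrangian_gap[OF k_pos] x_mem z_mem by (meson IntD1 IntD2 order_trans ereal_less_eq(3))
qed

end
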